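(* Let $\alpha:U\to V$ be a transmission between supertropical monoids which is injective on the set $eU\setminus\{0\}$. (i) If $\alpha$ has trivial ghost kernel (i.e. $\mathfrak A_\alpha=eU$) and $V$ is a semiring, then $U$ is a semiring. (ii) If $\alpha$ is surjective and $U$ is a semiring, then $V$ is a semiring.
   Context: A bipotent semiring is a commutative monoid $(M,\cdot)$ with absorbing element $0$, equipped with a total order compatible with multiplication in which $0$ is least; addition is $\max$. A supertropical monoid is a monoid $(U,\cdot)$ with absorbing element $0$ and a distinguished central idempotent $e$ with $ex=0\Rightarrow x=0$, together with a total ordering on $M:=eU$ compatible with multiplication making $M$ a bipotent semiring. Define on $U$: $x+y:=y$ if $ex<ey$, $x$ if $ex>ey$, $ex$ if $ex=ey$; $U$ "is a semiring" if this addition is associative and multiplication distributes over it from both sides. A transmission $\alpha:U\to V$ between supertropical monoids is a map with $\alpha(0)=0$, $\alpha(1)=1$, $\alpha(xy)=\alpha(x)\alpha(y)$, $\alpha(e_U)=e_V$, and $x\le y\Rightarrow\alpha(x)\le\alpha(y)$ for $x,y\in eU$. Its ghost kernel is $\mathfrak A_\alpha:=\{x\in U:\alpha(x)\in eV\}$. *)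

theory Defs
  imports Main
begin

text \<open>A supertropical monoid, with carrier the whole type 'a.
  The relation le is only meaningful on the ghost ideal M = eU.\<close>
record 'a stm =
  mul  :: "'a \<Rightarrow> 'a \<Rightarrow> 'a"
  one  :: 'a
  zero :: 'a
  ghost :: 'a
  le   :: "'a \<Rightarrow> 'a \<Rightarrow> bool"

definition ghostset :: "'a stm \<Rightarrow> 'a set" where
  "ghostset U = range (mul U (ghost U))"

definition supertropical_monoid :: "'a stm \<Rightarrow> bool" where
  "supertropical_monoid U \<longleftrightarrow>
     \<comment> \<open>(U,\<cdot>) is a monoid with absorbing element 0\<close>
     (\<forall>x y z. mul U (mul U x y) z = mul U x (mul U y z)) \<and>
     (\<forall>x. mul U (one U) x = x \<and> mul U x (one U) = x) \<and>
     (\<forall>x. mul U (zero U) x = zero U \<and> mul U x (zero U) = zero U) \<and>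
     \<comment> \<open>e is a central idempotent with ex = 0 \<Longrightarrow> x = 0\<close>
     mul U (ghost U) (ghost U) = ghost U \<and>
     (\<forall>x. mul U (ghost U) x = mul U x (ghost U)) \<and>
     (\<forall>x. mul U (ghost U) x = zero U \<longrightarrow> x = zero U) \<and>
     \<comment> \<open>M = eU is a bipotent semiring: commutative monoid, total order compatible
         with multiplication, 0 least\<close>
     (\<forall>x\<in>ghostset U. \<forall>y\<in>ghostset U. mul U x y = mul U y x) \<and>
     (\<forall>x\<in>ghostset U. le U x x) \<and>
     (\<forall>x\<in>ghostset U. \<forall>y\<in>ghostset U. le U x y \<and> le U y x \<longrightarrow> x = y) \<and>
     (\<forall>x\<in>ghostset U. \<forall>y\<in>ghostset U. \<forall>z\<in>ghostset U. le U x y \<and> le U y z \<longrightarrow> le U x z) \<and>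
     (\<forall>x\<in>ghostset U. \<forall>y\<in>ghostset U. le U x y \<or> le U y x) \<and>
     (\<forall>x\<in>ghostset U. \<forall>y\<in>ghostset U. \<forall>z\<in>ghostset U.
         le U x y \<longrightarrow> le U (mul U x z) (mul U y z)) \<and>
     (\<forall>x\<in>ghostset U. le U (zero U) x)"

definition st_add :: "'a stm \<Rightarrow> 'a \<Rightarrow> 'a \<Rightarrow> 'a" where
  "st_add U x y =
     (let ex = mul U (ghost U) x; ey = mul U (ghost U) y in
      if le U ex ey \<and> ex \<noteq> ey then y
      else if le U ey ex \<and> ex \<noteq> ey then x
      else ex)"

definition is_semiring :: "'a stm \<Rightarrow> bool" where
  "is_semiring U \<longleftrightarrow>
     (\<forall>x y z. st_add U (st_add U x y) z = st_add U x (st_add U y z)) \<and>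
     (\<forall>x y z. mul U x (st_add U y z) = st_add U (mul U x y) (mul U x z)) \<and>
     (\<forall>x y z. mul U (st_add U x y) z = st_add U (mul U x z) (mul U y z))"

definition transmission :: "'a stm \<Rightarrow> 'b stm \<Rightarrow> ('a \<Rightarrow> 'b) \<Rightarrow> bool" where
  "transmission U V \<alpha> \<longleftrightarrow>
     \<alpha> (zero U) = zero V \<and> \<alpha> (one U) = one V \<and>
     (\<forall>x y. \<alpha> (mul U x y) = mul V (\<alpha> x) (\<alpha> y)) \<and>
     \<alpha> (ghost U) = ghost V \<and>
     (\<forall>x\<in>ghostset U. \<forall>y\<in>ghostset U. le U x y \<longrightarrow> le V (\<alpha> x) (\<alpha> y))"

definition ghost_kernel :: "'a stm \<Rightarrow> 'b stm \<Rightarrow> ('a \<Rightarrow> 'b) \<Rightarrow> 'a set" where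
  "ghost_kernel U V \<alpha> = {x. \<alpha> x \<in> ghostset V}"

end

theory Submission
  imports Defs
begin

text \<open>The sum \<open>x + y\<close> is the summand with the larger ghost \<open>\<nu> x = e x\<close>, or the common ghost in a
  tie, so addition is always associative and everything reduces to the order of ghosts. A map
  commuting with \<open>\<nu>\<close> and monotone on ghosts, e.g. multiplication by a fixed element, preserves
  sums except that a tie it creates replaces the image of a sum by its ghost. A transmission
  injective on nonzero ghosts creates no ties except at \<open>0\<close>, so it preserves addition and
  multiplication, and semiring laws pass to a surjective image. Conversely, if the ghost kernel is
  trivial, \<open>\<alpha>\<close> reflects ghosts, which excludes the exceptional case of distributivity in \<open>U\<close>.\<close>

locale supertropical =
  fixes U :: "'a stm"
  assumes supertropical: "supertropical_monoid U"
begin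

abbreviation \<nu> :: "'a \<Rightarrow> 'a" where
  "\<nu> x \<equiv> mul U (ghost U) x"

abbreviation ghost_less :: "'a \<Rightarrow> 'a \<Rightarrow> bool" where
  "ghost_less a b \<equiv> le U a b \<and> a \<noteq> b"

lemma
  shows mul_assoc: "mul U (mul U x y) z = mul U x (mul U y z)"
    and ghost_idem: "mul U (ghost U) (ghost U) = ghost U"
    and ghost_central: "mul U (ghost U) x = mul U x (ghost U)"
    and mul_zero: "mul U x (zero U) = zero U"
    and nu_eq_zeroD: "\<nu> x = zero U \<Longrightarrow> x = zero U"
    and ghostset_mul_commute: "a \<in> ghostset U \<Longrightarrow> b \<in> ghostset U \<Longrightarrow> mul U a b = mul U b a"
    and ghostset_le_refl: "a \<in> ghostset U \<Longrightarrow> le U a a"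
    and ghostset_le_total: "a \<in> ghostset U \<Longrightarrow> b \<in> ghostset U \<Longrightarrow> le U a b \<or> le U b a"
    and ghostset_le_antisym:
      "a \<in> ghostset U \<Longrightarrow> b \<in> ghostset U \<Longrightarrow> le U a b \<Longrightarrow> le U b a \<Longrightarrow> a = b"
    and ghostset_le_trans:
      "a \<in> ghostset U \<Longrightarrow> b \<in> ghostset U \<Longrightarrow> c \<in> ghostset U \<Longrightarrow> le U a b \<Longrightarrow> le U b c
       \<Longrightarrow> le U a c"
    and ghostset_le_mul_right:
      "a \<in> ghostset U \<Longrightarrow> b \<in> ghostset U \<Longrightarrow> c \<in> ghostset U \<Longrightarrow> le U a b
       \<Longrightarrow> le U (mul U a c) (mul U b c)"
    and ghostset_zero_le: "a \<in> ghostset U \<Longrightarrow> le U (zero U) a"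
  using supertropical unfolding supertropical_monoid_def by metis+

lemma nu_in_ghostset: "\<nu> x \<in> ghostset U"
  unfolding ghostset_def by (rule rangeI)

lemma nu_nu [simp]: "\<nu> (\<nu> x) = \<nu> x"
  by (metis mul_assoc ghost_idem)

lemma nu_zero [simp]: "\<nu> (zero U) = zero U"
  by (rule mul_zero)

lemma nu_eq_zero_iff: "\<nu> x = zero U \<longleftrightarrow> x = zero U"
  using nu_eq_zeroD by auto

lemma mul_nu_left: "mul U (\<nu> x) y = \<nu> (mul U x y)"
  by (rule mul_assoc)

lemma mul_nu_right: "mul U x (\<nu> y) = \<nu> (mul U x y)"
  by (metis mul_assoc ghost_central)

lemma nu_mul: "\<nu> (mul U x y) = mul U (\<nu> x) (\<nu> y)"
  by (metis mul_nu_left mul_nu_right nu_nu)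

lemma ghostset_iff: "a \<in> ghostset U \<longleftrightarrow> \<nu> a = a"
proof
  assume "a \<in> ghostset U"
  then obtain b where "a = \<nu> b"
    by (auto simp: ghostset_def)
  then show "\<nu> a = a"
    by simp
next
  assume "\<nu> a = a"
  then show "a \<in> ghostset U"
    using nu_in_ghostset[of a] by simp
qed

lemma nu_mul_commute: "mul U (\<nu> x) (\<nu> y) = mul U (\<nu> y) (\<nu> x)"
  using ghostset_mul_commute nu_in_ghostset by blast

lemma le_total: "le U (\<nu> x) (\<nu> y) \<or> le U (\<nu> y) (\<nu> x)"
  using ghostset_le_total nu_in_ghostset by blast

lemma le_refl: "le U (\<nu> x) (\<nu> x)"
  using ghostset_le_refl nu_in_ghostset by blast

lemma le_antisym: "le U (\<nu> x) (\<nu> y) \<Longrightarrow> le U (\<nu> y) (\<nu> x) \<Longrightarrow> \<nu> x = \<nu> y"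
  using ghostset_le_antisym nu_in_ghostset by blast

lemma le_trans: "le U (\<nu> x) (\<nu> y) \<Longrightarrow> le U (\<nu> y) (\<nu> z) \<Longrightarrow> le U (\<nu> x) (\<nu> z)"
  using ghostset_le_trans nu_in_ghostset by blast

lemma le_mul_right:
  "le U (\<nu> x) (\<nu> y) \<Longrightarrow> le U (mul U (\<nu> x) (\<nu> z)) (mul U (\<nu> y) (\<nu> z))"
  using ghostset_le_mul_right nu_in_ghostset by blast

lemma zero_le: "le U (zero U) (\<nu> x)"
  using ghostset_zero_le nu_in_ghostset by blast

lemma less_le_trans: "ghost_less (\<nu> x) (\<nu> y) \<Longrightarrow> le U (\<nu> y) (\<nu> z) \<Longrightarrow> ghost_less (\<nu> x) (\<nu> z)"
  by (metis le_antisym le_trans)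

lemma less_trans: "ghost_less (\<nu> x) (\<nu> y) \<Longrightarrow> ghost_less (\<nu> y) (\<nu> z) \<Longrightarrow> ghost_less (\<nu> x) (\<nu> z)"
  using less_le_trans by blast

lemma not_less_zero: "\<not> ghost_less (\<nu> x) (zero U)"
  by (metis le_antisym nu_zero zero_le)

lemma ghost_cases [case_names less equal greater]:
  obtains "ghost_less (\<nu> x) (\<nu> y)" | "\<nu> x = \<nu> y" | "ghost_less (\<nu> y) (\<nu> x)"
  using le_total[of x y] by (cases "\<nu> x = \<nu> y") auto

lemma add_less: "ghost_less (\<nu> x) (\<nu> y) \<Longrightarrow> st_add U x y = y"
  unfolding st_add_def by simp

lemma add_eq: "\<nu> x = \<nu> y \<Longrightarrow> st_add U x y = \<nu> x"
  unfolding st_add_def by simp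

lemma add_greater: "ghost_less (\<nu> y) (\<nu> x) \<Longrightarrow> st_add U x y = x"
  using le_antisym[of x y] unfolding st_add_def Let_def by auto

lemma add_commute: "st_add U x y = st_add U y x"
  by (cases x y rule: ghost_cases) (simp_all add: add_less add_eq add_greater)

lemma le_nu_add_left: "le U (\<nu> x) (\<nu> (st_add U x y))"
  by (cases x y rule: ghost_cases) (auto simp: add_less add_eq add_greater le_refl)

lemma add_add_absorb_left:
  "ghost_less (\<nu> x) (\<nu> y) \<Longrightarrow> st_add U x (st_add U y z) = st_add U y z"
  by (meson add_less le_nu_add_left less_le_trans)

lemma add_add_absorb_middle:
  assumes "ghost_less (\<nu> y) (\<nu> x)"
  shows "st_add U x (st_add U y z) = st_add U x z"
proof (cases y z rule: ghost_cases)
  case less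
  then show ?thesis by (simp add: add_less)
next
  case equal
  then have "st_add U y z = \<nu> y"
    by (rule add_eq)
  with assms equal show ?thesis
    by (metis add_greater nu_nu)
next
  case greater
  then have "st_add U y z = y"
    by (rule add_greater)
  with assms greater show ?thesis
    by (metis add_greater less_trans)
qed

lemma add_add_tie:
  assumes "\<nu> x = \<nu> y"
  shows "st_add U x (st_add U y z) = st_add U (\<nu> x) z"
proof (cases y z rule: ghost_cases)
  case less
  then have "st_add U y z = z"
    by (rule add_less)
  with assms less show ?thesis
    by (metis add_less nu_nu)
next
  case equal
  then have "st_add U y z = \<nu> y"
    by (rule add_eq)
  with assms equal show ?thesis
    by (metis add_eq nu_nu)
next
  case greater
  then have "st_add U y z = y"
    by (rule add_greater)
  with assms greater show ?thesis
    by (metis add_eq add_greater nu_nu)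
qed

lemma add_assoc: "st_add U (st_add U x y) z = st_add U x (st_add U y z)"
  by (cases x y rule: ghost_cases)
    (simp_all add: add_less add_eq add_greater add_add_absorb_left add_add_absorb_middle add_add_tie)

text \<open>The second alternative occurs only where \<open>f\<close> collapses a strict inequality of ghosts.\<close>
lemma map_add_or_ghost:
  assumes f_nu: "\<And>w. f (\<nu> w) = \<nu> (f w)"
    and f_mono: "\<And>y z. le U (\<nu> y) (\<nu> z) \<Longrightarrow> le U (\<nu> (f y)) (\<nu> (f z))"
  shows "f (st_add U y z) = st_add U (f y) (f z) \<or> st_add U (f y) (f z) = \<nu> (f (st_add U y z))"
proof -
  have less_case: "f (st_add U y z) = st_add U (f y) (f z) \<or> st_add U (f y) (f z) = \<nu> (f (st_add U y z))"
    if "ghost_less (\<nu> y) (\<nu> z)" for y z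
    using that f_mono[of y z] by (cases "\<nu> (f y) = \<nu> (f z)") (simp_all add: add_less add_eq)
  show ?thesis
  proof (cases y z rule: ghost_cases)
    case less
    then show ?thesis by (rule less_case)
  next
    case equal
    then show ?thesis by (metis add_eq f_nu)
  next
    case greater
    from less_case[OF greater] show ?thesis
      by (simp only: add_commute[of z y] add_commute[of "f z" "f y"])
  qed
qed

lemma mul_add_or_ghost:
  "mul U x (st_add U y z) = st_add U (mul U x y) (mul U x z)
   \<or> st_add U (mul U x y) (mul U x z) = \<nu> (mul U x (st_add U y z))"
  by (rule map_add_or_ghost[where f = "mul U x", OF mul_nu_right])
    (metis le_mul_right nu_mul nu_mul_commute)

lemma add_mul_or_ghost:
  "mul U (st_add U x y) z = st_add U (mul U x z) (mul U y z)
   \<or> st_add U (mul U x z) (mul U y z) = \<nu> (mul U (st_add U x y) z)"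
  by (rule map_add_or_ghost[where f = "\<lambda>x. mul U x z", OF mul_nu_left])
    (metis le_mul_right nu_mul)

lemma is_semiring_iff:
  "is_semiring U \<longleftrightarrow>
     (\<forall>x y z. mul U x (st_add U y z) = st_add U (mul U x y) (mul U x z)) \<and>
     (\<forall>x y z. mul U (st_add U x y) z = st_add U (mul U x z) (mul U y z))"
  unfolding is_semiring_def using add_assoc by blast

end

locale supertropical_transmission =
  U: supertropical U + V: supertropical V
  for U :: "'a stm" and V :: "'b stm" +
  fixes \<alpha> :: "'a \<Rightarrow> 'b"
  assumes transmission: "transmission U V \<alpha>"
begin

lemma map_zero: "\<alpha> (zero U) = zero V"
  using transmission unfolding transmission_def by blast

lemma map_mul: "\<alpha> (mul U x y) = mul V (\<alpha> x) (\<alpha> y)"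
  using transmission unfolding transmission_def by blast

lemma map_nu: "\<alpha> (U.\<nu> x) = V.\<nu> (\<alpha> x)"
  using transmission unfolding transmission_def by simp

lemma map_mono: "le U (U.\<nu> x) (U.\<nu> y) \<Longrightarrow> le V (V.\<nu> (\<alpha> x)) (V.\<nu> (\<alpha> y))"
  using transmission unfolding transmission_def ghostset_def by (metis map_nu rangeI)

text \<open>Injectivity can only fail to preserve a strict inequality of ghosts through \<open>0\<close>, which
  the smaller ghost must then be, forcing both images to vanish.\<close>
lemma map_less_or_zero:
  assumes inj: "inj_on \<alpha> (ghostset U - {zero U})" and less: "U.ghost_less (U.\<nu> x) (U.\<nu> y)"
  shows "\<alpha> x = zero V \<and> \<alpha> y = zero V \<or> V.ghost_less (V.\<nu> (\<alpha> x)) (V.\<nu> (\<alpha> y))"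
proof (rule disjCI)
  assume "\<not> V.ghost_less (V.\<nu> (\<alpha> x)) (V.\<nu> (\<alpha> y))"
  with less map_mono have collapse: "\<alpha> (U.\<nu> x) = \<alpha> (U.\<nu> y)"
    by (simp add: map_nu)
  have "U.\<nu> y \<noteq> zero U"
    using less U.not_less_zero by metis
  with inj collapse less have "U.\<nu> x = zero U"
    unfolding inj_on_def by (metis DiffI U.ghostset_iff U.nu_nu singletonD)
  then have "x = zero U" and "V.\<nu> (\<alpha> y) = zero V"
    using collapse U.nu_eq_zero_iff by (simp_all add: map_nu map_zero)
  then show "\<alpha> x = zero V \<and> \<alpha> y = zero V"
    by (simp add: map_zero V.nu_eq_zero_iff)
qed

lemma map_add:
  assumes inj: "inj_on \<alpha> (ghostset U - {zero U})"
  shows "\<alpha> (st_add U x y) = st_add V (\<alpha> x) (\<alpha> y)"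
proof -
  have less_case: "\<alpha> (st_add U x y) = st_add V (\<alpha> x) (\<alpha> y)"
    if "U.ghost_less (U.\<nu> x) (U.\<nu> y)" for x y
    using map_less_or_zero[OF inj that] that
    by (auto simp: U.add_less V.add_less V.add_eq)
  show ?thesis
  proof (cases x y rule: U.ghost_cases)
    case less
    then show ?thesis by (rule less_case)
  next
    case equal
    then show ?thesis by (metis U.add_eq V.add_eq map_nu)
  next
    case greater
    then show ?thesis using less_case[of y x] by (simp add: U.add_commute V.add_commute)
  qed
qed

lemma is_semiring_image:
  assumes "inj_on \<alpha> (ghostset U - {zero U})" and "surj \<alpha>" and "is_semiring U"
  shows "is_semiring V"
  unfolding V.is_semiring_iff
proof (intro conjI allI)
  fix a b c
  obtain x y z where "a = \<alpha> x" "b = \<alpha> y" "c = \<alpha> z"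
    using \<open>surj \<alpha>\<close> by (metis surjD)
  with assms show "mul V a (st_add V b c) = st_add V (mul V a b) (mul V a c)"
    and "mul V (st_add V a b) c = st_add V (mul V a c) (mul V b c)"
    by (simp_all add: U.is_semiring_iff map_add[symmetric] map_mul[symmetric])
qed

lemma eq_if_eq_or_ghost:
  assumes kernel: "ghost_kernel U V \<alpha> = ghostset U"
    and "a = b \<or> b = U.\<nu> a" and "\<alpha> a = \<alpha> b"
  shows "a = b"
  using \<open>a = b \<or> b = U.\<nu> a\<close>
proof
  assume b: "b = U.\<nu> a"
  with \<open>\<alpha> a = \<alpha> b\<close> have "\<alpha> a \<in> ghostset V"
    by (simp add: map_nu V.ghostset_iff)
  with kernel have "a \<in> ghostset U"
    unfolding ghost_kernel_def by blast
  with b show "a = b"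
    by (simp add: U.ghostset_iff)
qed

lemma is_semiring_preimage:
  assumes "inj_on \<alpha> (ghostset U - {zero U})" and kernel: "ghost_kernel U V \<alpha> = ghostset U"
    and "is_semiring V"
  shows "is_semiring U"
  unfolding U.is_semiring_iff
proof (intro conjI allI)
  fix x y z
  show "mul U x (st_add U y z) = st_add U (mul U x y) (mul U x z)"
    using U.mul_add_or_ghost assms
    by (intro eq_if_eq_or_ghost[OF kernel]) (simp_all add: map_add map_mul V.is_semiring_iff)
  show "mul U (st_add U x y) z = st_add U (mul U x z) (mul U y z)"
    using U.add_mul_or_ghost assms
    by (intro eq_if_eq_or_ghost[OF kernel]) (simp_all add: map_add map_mul V.is_semiring_iff)
qed

end

theorem theorem1p5:
  fixes U :: "'a stm" and V :: "'b stm" and \<alpha> :: "'a \<Rightarrow> 'b"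
  assumes "supertropical_monoid U" and "supertropical_monoid V"
    and "transmission U V \<alpha>"
    and "inj_on \<alpha> (ghostset U - {zero U})"
  shows "(ghost_kernel U V \<alpha> = ghostset U \<and> is_semiring V \<longrightarrow> is_semiring U)
       \<and> (surj \<alpha> \<and> is_semiring U \<longrightarrow> is_semiring V)"
proof -
  interpret supertropical_transmission U V \<alpha>
    using assms by (simp add: supertropical_transmission_def supertropical_def
        supertropical_transmission_axioms_def)
  show ?thesis
    using assms(4) is_semiring_preimage is_semiring_image by blast
qed

end
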